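(* Let $\sigma_i:\mathbb{R}\to\mathbb{R}$ be a function that is bounded, twice continuously differentiable, has strictly positive first derivative at every point, has exactly one inflection point, located at $0$, satisfies $\sigma_i(0)=0$, $\sigma_i'(0)=1$, is Lipschitz continuous with Lipschitz constant $1$, and satisfies $\sigma_i(v)\in[-1,1]$ for all $v\in\mathbb{R}$. For $v_i,\Delta v_i\in\mathbb{R}$ define $\Delta s_i=\sigma_i(v_i+\Delta v_i)-\sigma_i(v_i)$. Then there exists a continuous, strictly monotonically decreasing function $\bar v_i:(0,1)\to(0,+\infty)$ with $\bar v_i(\lambda)\to+\infty$ as $\lambda\to0^+$ and $\bar v_i(\lambda)\to0$ as $\lambda\to1^-$, such that for every $\lambda_i\in(0,1)$, $$(\Delta v_i-\Delta s_i)(\Delta s_i-\lambda_i\Delta v_i)\geq 0$$ for all pairs $(v_i,v_i+\Delta v_i)\in[-\bar v_i(\lambda_i),\bar v_i(\lambda_i)]^2$. Moreover, for $\lambda_i=0$ the inequality $(\Delta v_i-\Delta s_i)\Delta s_i\geq0$ holds for all $(v_i,v_i+\Delta v_i)\in\mathbb{R}^2$. *)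

theory Defs
  imports "HOL-Analysis.Analysis"
begin

definition twice_cont_diff :: "(real \<Rightarrow> real) \<Rightarrow> bool" where
  "twice_cont_diff f \<longleftrightarrow>
     (\<forall>x. f differentiable (at x)) \<and>
     (\<forall>x. (deriv f) differentiable (at x)) \<and>
     continuous_on UNIV (deriv (deriv f))"

definition inflection_point :: "(real \<Rightarrow> real) \<Rightarrow> real \<Rightarrow> bool" where
  "inflection_point f x \<longleftrightarrow>
     (\<exists>e>0. (convex_on {x - e..x} f \<and> concave_on {x..x + e} f) \<or>
            (concave_on {x - e..x} f \<and> convex_on {x..x + e} f))"

end

theory Submission
  imports Defs
begin

text \<open>
  By the mean value theorem \<open>\<Delta>s = \<sigma>'(\<xi>) \<Delta>v\<close> for some \<open>\<xi>\<close> between \<open>v\<close> and \<open>v + \<Delta>v\<close>, so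
  \<open>(\<Delta>v - \<Delta>s)(\<Delta>s - \<lambda>\<Delta>v) = \<Delta>v\<^sup>2 (1 - \<sigma>'(\<xi>))(\<sigma>'(\<xi>) - \<lambda>)\<close>, and \<open>0 < \<sigma>' \<le> 1\<close> by the
  Lipschitz bound. Hence it suffices that \<open>\<sigma>' \<ge> \<lambda>\<close> on \<open>[-v\<^sub>b(\<lambda>), v\<^sub>b(\<lambda>)]\<close>. The minimum
  \<open>m(v) = sym_inf \<sigma>' v\<close> of \<open>\<sigma>'\<close> on \<open>[-v, v]\<close> is positive, continuous and nonincreasing with \<open>m(0) = 1\<close>;
  dividing by \<open>1 + v\<close> makes it a strictly decreasing homeomorphism \<open>h\<close> of \<open>[0, \<infinity>)\<close> onto
  \<open>(0, 1]\<close> that stays below \<open>m\<close>, and \<open>v\<^sub>b = h\<^sup>-\<^sup>1\<close> works since \<open>\<lambda> = h(v\<^sub>b(\<lambda>)) \<le> m(v\<^sub>b(\<lambda>))\<close>.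
  Only differentiability, \<open>\<sigma>' > 0\<close>, \<open>\<sigma>'(0) = 1\<close> and the Lipschitz bound are used.
\<close>

lemma lipschitz_on_has_real_derivative_abs_le:
  fixes f :: "real \<Rightarrow> real"
  assumes lip: "C-lipschitz_on S f" and "open S" "x \<in> S"
    and der: "(f has_real_derivative D) (at x)"
  shows "\<bar>D\<bar> \<le> C"
proof -
  have "((\<lambda>y. \<bar>(f y - f x) / (y - x)\<bar>) \<longlongrightarrow> \<bar>D\<bar>) (at x)"
    using der by (intro tendsto_rabs) (simp add: has_field_derivative_iff)
  moreover have "eventually (\<lambda>y. \<bar>(f y - f x) / (y - x)\<bar> \<le> C) (at x)"
  proof -
    have "eventually (\<lambda>y. y \<in> S) (at x)"
      using \<open>open S\<close> \<open>x \<in> S\<close> by (simp add: eventually_at_in_open')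
    then show ?thesis
    proof (rule eventually_mono)
      fix y assume "y \<in> S"
      then have "\<bar>f y - f x\<bar> \<le> C * \<bar>y - x\<bar>"
        using lipschitz_onD[OF lip] \<open>x \<in> S\<close> by (auto simp: dist_real_def)
      then show "\<bar>(f y - f x) / (y - x)\<bar> \<le> C"
        using lipschitz_on_nonneg[OF lip] by (auto simp: abs_divide divide_le_eq)
    qed
  qed
  ultimately show ?thesis
    by (rule tendsto_upperbound) simp
qed

lemma MVT_closed_segment:
  fixes f :: "real \<Rightarrow> real"
  assumes "\<And>x. x \<in> closed_segment a b \<Longrightarrow> (f has_real_derivative f' x) (at x)"
  obtains \<xi> where "\<xi> \<in> closed_segment a b" "f b - f a = f' \<xi> * (b - a)"
proof (cases a b rule: linorder_cases)
  case less
  then obtain z where "a < z" "z < b" "f b - f a = (b - a) * f' z"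
    using MVT2[of a b f f'] assms by (auto simp: closed_segment_eq_real_ivl)
  then show ?thesis
    using that[of z] less by (auto simp: closed_segment_eq_real_ivl)
next
  case greater
  then obtain z where "b < z" "z < a" "f a - f b = (a - b) * f' z"
    using MVT2[of b a f f'] assms by (auto simp: closed_segment_eq_real_ivl)
  then show ?thesis
    using that[of z] greater by (auto simp: closed_segment_eq_real_ivl algebra_simps)
qed (use that in auto)

lemma sector_condition_of_slope_bounds:
  fixes f :: "real \<Rightarrow> real"
  assumes der: "\<And>x. x \<in> closed_segment v w \<Longrightarrow> (f has_real_derivative f' x) (at x)"
    and bounds: "\<And>x. x \<in> closed_segment v w \<Longrightarrow> l \<le> f' x \<and> f' x \<le> 1"
  shows "0 \<le> ((w - v) - (f w - f v)) * ((f w - f v) - l * (w - v))"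
proof -
  obtain \<xi> where \<xi>: "\<xi> \<in> closed_segment v w" and slope: "f w - f v = f' \<xi> * (w - v)"
    using MVT_closed_segment der by blast
  have "((w - v) - (f w - f v)) * ((f w - f v) - l * (w - v))
        = (w - v)\<^sup>2 * ((1 - f' \<xi>) * (f' \<xi> - l))"
    unfolding slope by (simp add: power2_eq_square algebra_simps)
  also have "0 \<le> \<dots>"
    using bounds[OF \<xi>] by simp
  finally show ?thesis .
qed

lemma abs_cINF_diff_le:
  fixes f g :: "'a \<Rightarrow> real"
  assumes "A \<noteq> {}" "bdd_below (f ` A)" "bdd_below (g ` A)"
    and close: "\<And>x. x \<in> A \<Longrightarrow> \<bar>f x - g x\<bar> \<le> e"
  shows "\<bar>(INF x\<in>A. f x) - (INF x\<in>A. g x)\<bar> \<le> e"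
proof -
  have "(INF x\<in>A. f x) - e \<le> (INF x\<in>A. g x)"
  proof (rule cINF_greatest[OF \<open>A \<noteq> {}\<close>])
    fix x assume "x \<in> A"
    then show "(INF x\<in>A. f x) - e \<le> g x"
      using cINF_lower[OF assms(2)] close by fastforce
  qed
  moreover have "(INF x\<in>A. g x) - e \<le> (INF x\<in>A. f x)"
  proof (rule cINF_greatest[OF \<open>A \<noteq> {}\<close>])
    fix x assume "x \<in> A"
    then show "(INF x\<in>A. g x) - e \<le> f x"
      using cINF_lower[OF assms(3)] close by fastforce
  qed
  ultimately show ?thesis by linarith
qed

text \<open>Parametrising \<open>[-\<bar>v\<bar>, \<bar>v\<bar>]\<close> by \<open>[-1, 1]\<close> turns continuity of \<open>sym_inf f\<close> in \<open>v\<close> into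
  uniform continuity of \<open>f\<close>.\<close>

definition sym_inf :: "(real \<Rightarrow> real) \<Rightarrow> real \<Rightarrow> real" where
  "sym_inf f v = (INF t\<in>{-1..1}. f (t * v))"

lemma bdd_below_sym_inf_image:
  fixes f :: "real \<Rightarrow> real"
  assumes "continuous_on UNIV f"
  shows "bdd_below ((\<lambda>t. f (t * v)) ` {-1..1})"
proof -
  have "continuous_on {-1..1} (\<lambda>t. f (t * v))"
    by (intro continuous_on_compose2[OF assms] continuous_intros) auto
  then show ?thesis
    by (intro bounded_imp_bdd_below compact_imp_bounded compact_continuous_image) auto
qed

lemma sym_inf_le:
  fixes f :: "real \<Rightarrow> real"
  assumes "continuous_on UNIV f" "\<bar>x\<bar> \<le> \<bar>v\<bar>"
  shows "sym_inf f v \<le> f x"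
proof -
  define t where "t = (if v = 0 then 0 else x / v)"
  have "x = t * v" "t \<in> {-1..1}"
    using assms(2) by (auto simp: t_def abs_le_iff divide_simps split: if_splits)
  then show ?thesis
    unfolding sym_inf_def by (metis bdd_below_sym_inf_image[OF assms(1)] cINF_lower)
qed

lemma sym_inf_greatest:
  assumes "\<And>t. t \<in> {-1..1} \<Longrightarrow> c \<le> f (t * v)"
  shows "c \<le> sym_inf f v"
  unfolding sym_inf_def using assms by (intro cINF_greatest) auto

lemma sym_inf_0 [simp]: "sym_inf f 0 = f 0"
  by (simp add: sym_inf_def)

lemma sym_inf_attained:
  fixes f :: "real \<Rightarrow> real"
  assumes "continuous_on UNIV f"
  obtains x where "\<bar>x\<bar> \<le> \<bar>v\<bar>" "sym_inf f v = f x"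
proof -
  have "continuous_on {-1..1} (\<lambda>t. f (t * v))"
    by (intro continuous_on_compose2[OF assms] continuous_intros) auto
  then obtain t where t: "t \<in> {-1..1}" "\<And>s. s \<in> {-1..1} \<Longrightarrow> f (t * v) \<le> f (s * v)"
    using continuous_attains_inf[of "{-1..1}" "\<lambda>t. f (t * v)"] by auto
  have "\<bar>t * v\<bar> \<le> \<bar>v\<bar>"
    using t(1) by (auto simp: abs_mult intro: mult_left_le_one_le)
  moreover have "sym_inf f v = f (t * v)"
    using t sym_inf_greatest[of "f (t * v)"] sym_inf_le[OF assms] calculation by (meson antisym)
  ultimately show ?thesis using that by blast
qed

lemma sym_inf_antimono:
  fixes f :: "real \<Rightarrow> real"
  assumes "continuous_on UNIV f" "0 \<le> a" "a \<le> b"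
  shows "sym_inf f b \<le> sym_inf f a"
proof (rule sym_inf_greatest)
  fix t :: real assume "t \<in> {-1..1}"
  then have "\<bar>t\<bar> * a \<le> a"
    using assms(2) by (intro mult_left_le_one_le) auto
  then have "\<bar>t * a\<bar> \<le> \<bar>b\<bar>"
    using assms(2,3) by (simp add: abs_mult)
  then show "sym_inf f b \<le> f (t * a)"
    by (rule sym_inf_le[OF assms(1)])
qed

lemma isCont_sym_inf:
  fixes f :: "real \<Rightarrow> real"
  assumes cont: "continuous_on UNIV f"
  shows "isCont (sym_inf f) v0"
  unfolding continuous_at_eps_delta
proof (intro allI impI)
  fix e :: real assume "e > 0"
  define K where "K = cball (0::real) (\<bar>v0\<bar> + 1)"
  have "uniformly_continuous_on K f"
    unfolding K_def by (intro compact_uniformly_continuous continuous_on_subset[OF cont]) auto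
  then obtain r where "r > 0" and r: "\<And>x y. x \<in> K \<Longrightarrow> y \<in> K \<Longrightarrow> dist y x < r \<Longrightarrow> dist (f y) (f x) < e/2"
    using \<open>e > 0\<close> unfolding uniformly_continuous_on_def by (meson half_gt_zero)
  have "\<bar>sym_inf f v - sym_inf f v0\<bar> < e" if "\<bar>v - v0\<bar> < min 1 r" for v
  proof -
    have "\<bar>f (t * v) - f (t * v0)\<bar> \<le> e/2" if "t \<in> {-1..1}" for t
    proof -
      have "\<bar>t\<bar> \<le> 1" using that by auto
      then have "\<bar>t * v - t * v0\<bar> \<le> \<bar>v - v0\<bar>" "\<bar>t * v\<bar> \<le> \<bar>v\<bar>" "\<bar>t * v0\<bar> \<le> \<bar>v0\<bar>"
        by (auto simp: abs_mult right_diff_distrib[symmetric] intro: mult_left_le_one_le)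
      moreover have "\<bar>v\<bar> \<le> \<bar>v0\<bar> + 1"
        using \<open>\<bar>v - v0\<bar> < min 1 r\<close> by arith
      ultimately have "t * v \<in> K" "t * v0 \<in> K" "dist (t * v) (t * v0) < r"
        using \<open>\<bar>v - v0\<bar> < min 1 r\<close> by (auto simp: K_def dist_real_def)
      then show ?thesis
        using r[of "t * v0" "t * v"] by (simp add: dist_real_def)
    qed
    then have "\<bar>sym_inf f v - sym_inf f v0\<bar> \<le> e/2"
      unfolding sym_inf_def by (intro abs_cINF_diff_le bdd_below_sym_inf_image[OF cont]) auto
    then show ?thesis using \<open>e > 0\<close> by linarith
  qed
  then show "\<exists>d>0. \<forall>v. dist v v0 < d \<longrightarrow> dist (sym_inf f v) (sym_inf f v0) < e"
    using \<open>r > 0\<close> by (intro exI[of _ "min 1 r"]) (auto simp: dist_real_def)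
qed

lemma sym_inf_pos:
  fixes f :: "real \<Rightarrow> real"
  assumes "continuous_on UNIV f" "\<And>x. 0 < f x"
  shows "0 < sym_inf f v"
  using sym_inf_attained[OF assms(1)] assms(2) by metis

lemma sector_condition_of_sym_inf:
  fixes f f' :: "real \<Rightarrow> real"
  assumes der: "\<And>x. (f has_real_derivative f' x) (at x)" and cont: "continuous_on UNIV f'"
    and le_1: "\<And>x. f' x \<le> 1" and "l \<le> sym_inf f' r" and "v \<in> {-r..r}" "v + dv \<in> {-r..r}"
  shows "0 \<le> (dv - (f (v + dv) - f v)) * ((f (v + dv) - f v) - l * dv)"
proof -
  have "l \<le> f' x" if "x \<in> closed_segment v (v + dv)" for x
  proof -
    have "x \<in> {-r..r}"
      using that assms(5,6) closed_segment_subset[of v "{-r..r}" "v + dv"] by auto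
    then have "sym_inf f' r \<le> f' x"
      by (intro sym_inf_le[OF cont]) auto
    then show ?thesis
      using \<open>l \<le> sym_inf f' r\<close> by linarith
  qed
  then show ?thesis
    using sector_condition_of_slope_bounds[of v "v + dv" f f' l] der le_1 by simp
qed

locale decreasing_onto_unit_interval =
  fixes h :: "real \<Rightarrow> real"
  assumes cont: "continuous_on {0..} h"
    and strict_dec: "\<And>a b. 0 \<le> a \<Longrightarrow> a < b \<Longrightarrow> h b < h a"
    and at_0: "h 0 = 1"
    and tendsto_0: "(h \<longlongrightarrow> 0) at_top"
begin

definition h_inv :: "real \<Rightarrow> real" where
  "h_inv = inv_into {0..} h"

lemma h_pos: "0 \<le> v \<Longrightarrow> 0 < h v"
proof -
  assume "0 \<le> v"
  have "eventually (\<lambda>x. h x \<le> h (v + 1)) at_top"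
    using eventually_ge_at_top[of "v + 1"]
  proof eventually_elim
    case (elim x)
    then show ?case
      using strict_dec[of "v + 1" x] \<open>0 \<le> v\<close> by (cases "x = v + 1") auto
  qed
  then have "0 \<le> h (v + 1)"
    using tendsto_upperbound[OF tendsto_0] by simp
  also have "h (v + 1) < h v"
    using \<open>0 \<le> v\<close> by (intro strict_dec) auto
  finally show ?thesis .
qed

lemma h_le_1: "0 \<le> v \<Longrightarrow> h v \<le> 1"
  using strict_dec[of 0 v] at_0 by (cases "v = 0") auto

lemma inj_on_h: "inj_on h {0..}"
proof (rule inj_onI)
  fix a b assume "a \<in> {0..}" "b \<in> {0..}" "h a = h b"
  then show "a = b"
    using strict_dec[of a b] strict_dec[of b a] by (cases a b rule: linorder_cases) auto
qed

lemma h_image: "h ` {0..} = {0<..1}"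
proof
  show "h ` {0..} \<subseteq> {0<..1}"
    using h_pos h_le_1 by auto
  show "{0<..1} \<subseteq> h ` {0..}"
  proof
    fix l :: real assume l: "l \<in> {0<..1}"
    have "eventually (\<lambda>x. 0 \<le> x \<and> h x < l) at_top"
      using order_tendstoD(2)[OF tendsto_0, of l] l eventually_ge_at_top[of 0]
      by (auto intro: eventually_conj)
    then obtain x where "0 \<le> x" "h x \<le> l"
      by (auto simp: eventually_at_top_linorder intro: less_imp_le)
    moreover have "continuous_on {0..x} h"
      using continuous_on_subset[OF cont] by auto
    ultimately obtain v where "0 \<le> v" "v \<le> x" "h v = l"
      using IVT2'[of h x l 0] at_0 l by auto
    then show "l \<in> h ` {0..}" by auto
  qed
qed

lemma h_h_inv: "l \<in> {0<..1} \<Longrightarrow> 0 \<le> h_inv l \<and> h (h_inv l) = l"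
  unfolding h_inv_def using h_image inv_into_into[of l h "{0..}"] f_inv_into_f[of l h "{0..}"]
  by auto

lemma h_inv_h: "0 \<le> v \<Longrightarrow> h_inv (h v) = v"
  unfolding h_inv_def using inj_on_h by (simp add: inv_into_f_f)

lemma h_inv_pos: "l \<in> {0<..<1} \<Longrightarrow> 0 < h_inv l"
  using h_h_inv[of l] at_0 by (cases "h_inv l = 0") auto

lemma h_inv_strict_dec:
  assumes "a \<in> {0<..<1}" "b \<in> {0<..<1}" "a < b"
  shows "h_inv b < h_inv a"
proof (rule ccontr)
  assume "\<not> h_inv b < h_inv a"
  then have "h (h_inv b) \<le> h (h_inv a)"
    using h_h_inv[of a] assms strict_dec[of "h_inv a" "h_inv b"] by (cases "h_inv a = h_inv b") auto
  then show False
    using h_h_inv[of a] h_h_inv[of b] assms by auto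
qed

lemma continuous_on_h_inv: "continuous_on {0<..<1} h_inv"
proof (intro continuous_at_imp_continuous_on ballI)
  fix l :: real assume l: "l \<in> {0<..<1}"
  define x where "x = h_inv l"
  have "0 < x" "h x = l"
    using h_inv_pos[OF l] h_h_inv[of l] l by (auto simp: x_def)
  have near_pos: "0 < z" if "\<bar>z - x\<bar> \<le> x/2" for z
    using abs_le_D2[OF that] \<open>0 < x\<close> by simp
  have "continuous_on {0<..} h"
    by (rule continuous_on_subset[OF cont]) auto
  then have isCont_near: "isCont h z" if "\<bar>z - x\<bar> \<le> x/2" for z
    using near_pos[OF that] by (simp add: continuous_on_eq_continuous_at)
  have h_inv_near: "h_inv (h z) = z" if "\<bar>z - x\<bar> \<le> x/2" for z
    using near_pos[OF that] by (simp add: h_inv_h)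
  have "isCont h_inv (h x)"
    by (rule isCont_inverse_function[of "x/2"]) (simp_all add: \<open>0 < x\<close> isCont_near h_inv_near)
  then show "isCont h_inv l"
    using \<open>h x = l\<close> by simp
qed

lemma filterlim_h_inv_at_right_0: "filterlim h_inv at_top (at_right 0)"
  unfolding filterlim_at_top eventually_at_right_field
proof
  fix Z :: real
  define B where "B = max Z 0"
  have "Z \<le> h_inv l" if l: "0 < l" "l < min (h B) 1" for l
  proof (rule ccontr)
    assume "\<not> Z \<le> h_inv l"
    then have "h B < h (h_inv l)"
      using h_h_inv[of l] l by (intro strict_dec) (auto simp: B_def)
    then show False
      using h_h_inv[of l] l by simp
  qed
  moreover have "0 < min (h B) 1"
    using h_pos[of B] by (simp add: B_def)
  ultimately show "\<exists>b>0. \<forall>l>0. l < b \<longrightarrow> Z \<le> h_inv l"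
    by blast
qed

lemma tendsto_h_inv_at_left_1: "(h_inv \<longlongrightarrow> 0) (at_left 1)"
proof (rule tendstoI)
  fix e :: real assume "e > 0"
  show "eventually (\<lambda>l. dist (h_inv l) 0 < e) (at_left 1)"
    unfolding eventually_at_left_field
  proof (intro exI[of _ "max (h e) 0"] conjI allI impI)
    show "max (h e) 0 < 1"
      using strict_dec[of 0 e] at_0 \<open>e > 0\<close> by simp
    fix l :: real assume l: "max (h e) 0 < l" "l < 1"
    have "h_inv l < e"
    proof (rule ccontr)
      assume "\<not> h_inv l < e"
      then have "h (h_inv l) \<le> h e"
        using strict_dec[of e "h_inv l"] \<open>e > 0\<close> by (cases "h_inv l = e") auto
      then show False
        using h_h_inv[of l] l by simp
    qed
    then show "dist (h_inv l) 0 < e"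
      using h_h_inv[of l] l by simp
  qed
qed

end

lemma decreasing_onto_unit_interval_sym_inf:
  fixes f :: "real \<Rightarrow> real"
  assumes cont: "continuous_on UNIV f" and pos: "\<And>x. 0 < f x" and "f 0 = 1"
  shows "decreasing_onto_unit_interval (\<lambda>v. sym_inf f v / (1 + v))"
proof
  show "continuous_on {0..} (\<lambda>v. sym_inf f v / (1 + v))"
    by (intro continuous_at_imp_continuous_on ballI continuous_intros isCont_sym_inf[OF cont]) auto
  show "sym_inf f b / (1 + b) < sym_inf f a / (1 + a)" if "0 \<le> a" "a < b" for a b
  proof -
    have "sym_inf f b / (1 + b) < sym_inf f b / (1 + a)"
      using that sym_inf_pos[OF cont pos] by (intro divide_strict_left_mono) auto
    also have "\<dots> \<le> sym_inf f a / (1 + a)"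
      using that sym_inf_antimono[OF cont] by (intro divide_right_mono) auto
    finally show ?thesis .
  qed
  show "sym_inf f 0 / (1 + 0) = 1"
    using \<open>f 0 = 1\<close> by simp
  have "((\<lambda>v. 1 / (1 + v)) \<longlongrightarrow> 0) (at_top :: real filter)"
    by (intro tendsto_divide_0[OF tendsto_const] filterlim_at_top_imp_at_infinity
        filterlim_tendsto_add_at_top[OF tendsto_const] filterlim_ident)
  moreover have "eventually (\<lambda>v. 0 \<le> sym_inf f v / (1 + v) \<and> sym_inf f v / (1 + v) \<le> 1 / (1 + v)) at_top"
    using eventually_ge_at_top[of 0]
  proof eventually_elim
    case (elim v)
    then show ?case
      using sym_inf_pos[OF cont pos, of v] sym_inf_le[OF cont, of 0 v] \<open>f 0 = 1\<close>
      by (auto intro: divide_right_mono)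
  qed
  ultimately show "((\<lambda>v. sym_inf f v / (1 + v)) \<longlongrightarrow> 0) at_top"
    by (auto intro: tendsto_sandwich[OF _ _ tendsto_const] elim: eventually_mono)
qed

theorem lemma2:
  fixes \<sigma> :: "real \<Rightarrow> real"
  assumes bnd: "bounded (range \<sigma>)"
    and c2: "twice_cont_diff \<sigma>"
    and pos: "\<And>x. deriv \<sigma> x > 0"
    and infl: "{x. inflection_point \<sigma> x} = {0}"
    and zero: "\<sigma> 0 = 0"
    and d0: "deriv \<sigma> 0 = 1"
    and lip: "1-lipschitz_on UNIV \<sigma>"
    and rng: "\<And>v. \<sigma> v \<in> {-1..1}"
  shows "(\<exists>vb :: real \<Rightarrow> real.
            continuous_on {0<..<1} vb \<and>
            (\<forall>a\<in>{0<..<1}. \<forall>b\<in>{0<..<1}. a < b \<longrightarrow> vb b < vb a) \<and>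
            (\<forall>l\<in>{0<..<1}. vb l > 0) \<and>
            filterlim vb at_top (at_right 0) \<and>
            (vb \<longlongrightarrow> 0) (at_left 1) \<and>
            (\<forall>l\<in>{0<..<1}. \<forall>v dv.
               v \<in> {- vb l..vb l} \<and> v + dv \<in> {- vb l..vb l} \<longrightarrow>
               (dv - (\<sigma> (v + dv) - \<sigma> v)) * ((\<sigma> (v + dv) - \<sigma> v) - l * dv) \<ge> 0))
         \<and> (\<forall>v dv. (dv - (\<sigma> (v + dv) - \<sigma> v)) * (\<sigma> (v + dv) - \<sigma> v) \<ge> 0)"
proof -
  define d where "d = deriv \<sigma>"
  have der: "(\<sigma> has_real_derivative d x) (at x)" for x
    using c2 unfolding twice_cont_diff_def d_def by (simp add: DERIV_deriv_iff_real_differentiable)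
  have d_cont: "continuous_on UNIV d"
    using c2 unfolding twice_cont_diff_def d_def
    by (intro continuous_at_imp_continuous_on ballI differentiable_imp_continuous_within) auto
  have d_pos: "0 < d x" for x
    using pos by (simp add: d_def)
  have d_le_1: "d x \<le> 1" for x
    using lipschitz_on_has_real_derivative_abs_le[OF lip open_UNIV UNIV_I der] by (rule abs_le_D1)
  interpret h: decreasing_onto_unit_interval "\<lambda>v. sym_inf d v / (1 + v)"
    using d_cont d_pos d0 by (intro decreasing_onto_unit_interval_sym_inf) (simp_all add: d_def)
  have "0 \<le> (dv - (\<sigma> (v + dv) - \<sigma> v)) * ((\<sigma> (v + dv) - \<sigma> v) - l * dv)"
    if l: "l \<in> {0<..<1}" and v: "v \<in> {- h.h_inv l..h.h_inv l} \<and> v + dv \<in> {- h.h_inv l..h.h_inv l}"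
    for l v dv
  proof (rule sector_condition_of_sym_inf[OF der d_cont d_le_1])
    have "0 \<le> h.h_inv l" and l_eq: "sym_inf d (h.h_inv l) / (1 + h.h_inv l) = l"
      using h.h_h_inv[of l] l by auto
    then have "sym_inf d (h.h_inv l) / (1 + h.h_inv l) \<le> sym_inf d (h.h_inv l)"
      using sym_inf_pos[OF d_cont d_pos, of "h.h_inv l"] by (intro mult_imp_div_pos_le) (auto simp: mult_le_cancel_left1)
    then show "l \<le> sym_inf d (h.h_inv l)"
      unfolding l_eq .
  qed (use v in auto)
  moreover have "0 \<le> (dv - (\<sigma> (v + dv) - \<sigma> v)) * (\<sigma> (v + dv) - \<sigma> v)" for v dv
    using sector_condition_of_slope_bounds[of v "v + dv" \<sigma> d 0] der d_pos d_le_1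
    by (simp add: less_imp_le)
  ultimately show ?thesis
    using h.continuous_on_h_inv h.h_inv_strict_dec h.h_inv_pos h.filterlim_h_inv_at_right_0
      h.tendsto_h_inv_at_left_1
    by blast
qed

end
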